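(* Let $(M,d)$ be a complete pointed metric space and let $\mu,\nu$ be positive Radon measures on $\beta\widetilde{M}$. Then $\mu\preccurlyeq\nu$ and $\nu\preccurlyeq\mu$ if and only if $q_\sharp\mu=q_\sharp\nu$.
   Context: $\widetilde{M}=\{(x,y)\in M\times M:x\ne y\}$, $\beta\widetilde{M}$ its Stone–Čech compactification; Radon measures identified with $C(\beta\widetilde{M})^*$. $G$ is the set of $g\in C(\beta\widetilde{M})$ with $d(x,y)g(x,y)\le d(x,u)g(x,u)+d(u,y)g(u,y)$ for all distinct $x,u,y\in M$; $\mu\preccurlyeq\nu$ iff $\int g\,d\mu\le\int g\,d\nu$ for all $g\in G$. Define $\zeta\sim\omega$ on $\beta\widetilde{M}$ iff $g(\zeta)=g(\omega)$ for all $g\in G$; $\widetilde{M}^G=\beta\widetilde{M}/\!\sim$ with the quotient topology (compact Hausdorff), $q:\beta\widetilde{M}\to\widetilde{M}^G$ the quotient map, and $q_\sharp$ the pushforward of measures. Throughout, $M$ has at least three distinct points. *)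

theory Defs
  imports "HOL-Analysis.Analysis"
begin

text \<open>Off-diagonal set of pairs of distinct points of M (here M is the type 'a).\<close>
definition Mtilde :: "('a \<times> 'a) set" where
  "Mtilde = {(x, y). x \<noteq> y}"

text \<open>Bounded continuous real functions on Mtilde (Mtilde carries the subspace
  topology of the product metric).\<close>
definition Cb :: "(('a::metric_space \<times> 'a) \<Rightarrow> real) set" where
  "Cb = {f. continuous_on Mtilde f \<and> bounded (f ` Mtilde)}"

definition ev :: "('a::metric_space \<times> 'a) \<Rightarrow> ((('a \<times> 'a) \<Rightarrow> real) \<Rightarrow> real)" where
  "ev p = restrict (\<lambda>f. f p) Cb"

text \<open>The Stone-Cech compactification beta Mtilde, realised in the standard way as the
  closure of the image of the evaluation embedding in the product space.\<close>
definition betaM :: "((('a::metric_space \<times> 'a) \<Rightarrow> real) \<Rightarrow> real) topology" where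
  "betaM = subtopology (product_topology (\<lambda>_. euclideanreal) Cb)
      ((product_topology (\<lambda>_. euclideanreal) Cb) closure_of (ev ` Mtilde))"

definition Cbeta :: "(((('a::metric_space \<times> 'a) \<Rightarrow> real) \<Rightarrow> real) \<Rightarrow> real) set" where
  "Cbeta = {g. continuous_map betaM euclideanreal g}"

text \<open>Positive Radon measures on a compact Hausdorff space X, identified (Riesz) with
  positive linear functionals on C(X).\<close>
definition positive_radon :: "'b topology \<Rightarrow> (('b \<Rightarrow> real) \<Rightarrow> real) \<Rightarrow> bool" where
  "positive_radon X L \<longleftrightarrow>
     (\<forall>f g. continuous_map X euclideanreal f \<longrightarrow> continuous_map X euclideanreal g \<longrightarrow>
        L (\<lambda>x. f x + g x) = L f + L g) \<and>
     (\<forall>c f. continuous_map X euclideanreal f \<longrightarrow> L (\<lambda>x. c * f x) = c * L f) \<and>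
     (\<forall>f. continuous_map X euclideanreal f \<longrightarrow> (\<forall>x\<in>topspace X. 0 \<le> f x) \<longrightarrow> 0 \<le> L f)"

definition Gset :: "(((('a::metric_space \<times> 'a) \<Rightarrow> real) \<Rightarrow> real) \<Rightarrow> real) set" where
  "Gset = {g \<in> Cbeta. \<forall>x u y. x \<noteq> u \<and> u \<noteq> y \<and> x \<noteq> y \<longrightarrow>
      dist x y * g (ev (x, y)) \<le> dist x u * g (ev (x, u)) + dist u y * g (ev (u, y))}"

definition preceq ::
  "((((('a::metric_space \<times> 'a) \<Rightarrow> real) \<Rightarrow> real) \<Rightarrow> real) \<Rightarrow> real) \<Rightarrow>
   ((((('a \<times> 'a) \<Rightarrow> real) \<Rightarrow> real) \<Rightarrow> real) \<Rightarrow> real) \<Rightarrow> bool" where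
  "preceq \<mu> \<nu> \<longleftrightarrow> (\<forall>g\<in>Gset. \<mu> g \<le> \<nu> g)"

definition Gequiv :: "((('a::metric_space \<times> 'a) \<Rightarrow> real) \<Rightarrow> real) \<Rightarrow> ((('a \<times> 'a) \<Rightarrow> real) \<Rightarrow> real) \<Rightarrow> bool" where
  "Gequiv \<zeta> \<omega> \<longleftrightarrow> (\<forall>g\<in>Gset. g \<zeta> = g \<omega>)"

definition qmap :: "((('a::metric_space \<times> 'a) \<Rightarrow> real) \<Rightarrow> real) \<Rightarrow> ((('a \<times> 'a) \<Rightarrow> real) \<Rightarrow> real) set" where
  "qmap \<zeta> = {\<omega> \<in> topspace betaM. Gequiv \<zeta> \<omega>}"

definition quotient_top :: "'b topology \<Rightarrow> ('b \<Rightarrow> 'c) \<Rightarrow> 'c topology" where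
  "quotient_top X f = topology (\<lambda>U. U \<subseteq> f ` topspace X \<and> openin X {x \<in> topspace X. f x \<in> U})"

definition MG :: "(((('a::metric_space \<times> 'a) \<Rightarrow> real) \<Rightarrow> real) set) topology" where
  "MG = quotient_top betaM qmap"

definition push :: "((((('a::metric_space \<times> 'a) \<Rightarrow> real) \<Rightarrow> real) \<Rightarrow> real) \<Rightarrow> real) \<Rightarrow>
    ((((('a \<times> 'a) \<Rightarrow> real) \<Rightarrow> real) set \<Rightarrow> real) \<Rightarrow> real)" where
  "push \<mu> f = \<mu> (f \<circ> qmap)"

end

theory Submission
  imports Defs
begin

text \<open>
  Mutual domination \<open>\<mu> \<preccurlyeq> \<nu> \<preccurlyeq> \<mu>\<close> says that \<open>\<mu>\<close> and \<open>\<nu>\<close> agree on the cone \<open>G\<close>, hence on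
  \<open>G - G\<close>, which is a vector lattice because \<open>G\<close> is a convex cone closed under \<open>max\<close> and
  containing the nonnegative constants. Any \<open>f \<circ> q\<close> is continuous and constant on \<open>\<sim>\<close>-classes,
  while \<open>G - G\<close> separates points lying in different classes; so by the lattice
  (Kakutani-Krein) form of the Stone-Weierstrass theorem on the compact space \<open>\<beta>M\<close>, \<open>f \<circ> q\<close> is a
  uniform limit of elements of \<open>G - G\<close>, and positive functionals agreeing on \<open>G\<close> agree on it.
  Conversely every \<open>g \<in> G\<close> is constant on \<open>\<sim>\<close>-classes, hence factors continuously as \<open>f \<circ> q\<close>,
  so \<open>q\<^sub>\<sharp>\<mu> = q\<^sub>\<sharp>\<nu>\<close> gives \<open>\<mu> g = \<nu> g\<close>.
\<close>

lemma openin_quotient_top: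
  "openin (quotient_top X f) U \<longleftrightarrow> U \<subseteq> f ` topspace X \<and> openin X {x \<in> topspace X. f x \<in> U}"
proof -
  have "istopology (\<lambda>U. U \<subseteq> f ` topspace X \<and> openin X {x \<in> topspace X. f x \<in> U})"
    unfolding istopology_def
  proof (rule conjI; intro allI impI)
    fix U V
    assume "U \<subseteq> f ` topspace X \<and> openin X {x \<in> topspace X. f x \<in> U}"
      and "V \<subseteq> f ` topspace X \<and> openin X {x \<in> topspace X. f x \<in> V}"
    moreover have "{x \<in> topspace X. f x \<in> U \<inter> V} =
        {x \<in> topspace X. f x \<in> U} \<inter> {x \<in> topspace X. f x \<in> V}" by auto
    ultimately show "U \<inter> V \<subseteq> f ` topspace X \<and> openin X {x \<in> topspace X. f x \<in> U \<inter> V}"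
      by auto
  next
    fix \<U>
    assume "\<forall>U\<in>\<U>. U \<subseteq> f ` topspace X \<and> openin X {x \<in> topspace X. f x \<in> U}"
    moreover have "{x \<in> topspace X. f x \<in> \<Union>\<U>} = (\<Union>U\<in>\<U>. {x \<in> topspace X. f x \<in> U})" by auto
    ultimately show "\<Union>\<U> \<subseteq> f ` topspace X \<and> openin X {x \<in> topspace X. f x \<in> \<Union>\<U>}"
      by auto
  qed
  then show ?thesis unfolding quotient_top_def by simp
qed

lemma topspace_quotient_top: "topspace (quotient_top X f) = f ` topspace X"
proof (rule subset_antisym)
  show "topspace (quotient_top X f) \<subseteq> f ` topspace X"
    using openin_topspace[of "quotient_top X f"] unfolding openin_quotient_top by (elim conjE)
  have "{x \<in> topspace X. f x \<in> f ` topspace X} = topspace X" by auto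
  then have "openin (quotient_top X f) (f ` topspace X)"
    by (simp add: openin_quotient_top)
  then show "f ` topspace X \<subseteq> topspace (quotient_top X f)"
    by (rule openin_subset)
qed

lemma quotient_map_quotient_top: "quotient_map X (quotient_top X f) f"
  unfolding quotient_map_def topspace_quotient_top openin_quotient_top by auto

lemma compactin_closure_of_bounded_product:
  assumes "S \<subseteq> PiE I (\<lambda>i. {- B i .. B i})"
  shows "compactin (product_topology (\<lambda>_. euclideanreal) I)
           (product_topology (\<lambda>_. euclideanreal) I closure_of S)"
proof -
  let ?P = "product_topology (\<lambda>_. euclideanreal) I"
  have box: "compactin ?P (PiE I (\<lambda>i. {- B i .. B i}))"
    by (simp add: compactin_PiE)
  then have "closedin ?P (PiE I (\<lambda>i. {- B i .. B i}))"
    by (intro compactin_imp_closedin) (simp add: Hausdorff_space_product_topology)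
  then have "?P closure_of S \<subseteq> PiE I (\<lambda>i. {- B i .. B i})"
    using assms by (rule closure_of_minimal[rotated])
  then show ?thesis
    using box closedin_closure_of closed_compactin by metis
qed

lemma compact_space_betaM: "compact_space (betaM :: ((('a::metric_space \<times> 'a) \<Rightarrow> real) \<Rightarrow> real) topology)"
proof -
  have "\<forall>f\<in>(Cb :: (('a \<times> 'a) \<Rightarrow> real) set). \<exists>b. \<forall>p\<in>Mtilde. f p \<in> {- b .. b}"
    unfolding Cb_def bounded_real by (auto simp: abs_le_iff minus_le_iff)
  then obtain B where "\<forall>f\<in>(Cb :: (('a \<times> 'a) \<Rightarrow> real) set). \<forall>p\<in>Mtilde. f p \<in> {- B f .. B f}"
    by (rule bchoice[elim_format]) blast
  then have "ev ` Mtilde \<subseteq> PiE Cb (\<lambda>f. {- B f .. B f})"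
    by (auto simp: ev_def)
  then show ?thesis
    unfolding compact_space_def betaM_def
    by (intro compact_space_subtopology[unfolded compact_space_def] compactin_closure_of_bounded_product)
qed

context
  fixes X :: "'b topology" and \<mu> :: "('b \<Rightarrow> real) \<Rightarrow> real"
  assumes \<mu>: "positive_radon X \<mu>"
begin

lemma positive_radon_add:
  "continuous_map X euclideanreal f \<Longrightarrow> continuous_map X euclideanreal g \<Longrightarrow>
    \<mu> (\<lambda>x. f x + g x) = \<mu> f + \<mu> g"
  using \<mu> unfolding positive_radon_def by blast

lemma positive_radon_scale: "continuous_map X euclideanreal f \<Longrightarrow> \<mu> (\<lambda>x. c * f x) = c * \<mu> f"
  using \<mu> unfolding positive_radon_def by blast

lemma positive_radon_nonneg:
  "continuous_map X euclideanreal f \<Longrightarrow> (\<And>x. x \<in> topspace X \<Longrightarrow> 0 \<le> f x) \<Longrightarrow> 0 \<le> \<mu> f"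
  using \<mu> unfolding positive_radon_def by blast

lemma positive_radon_diff:
  assumes f: "continuous_map X euclideanreal f" and g: "continuous_map X euclideanreal g"
  shows "\<mu> (\<lambda>x. f x - g x) = \<mu> f - \<mu> g"
proof -
  have "\<mu> (\<lambda>x. f x + -1 * g x) = \<mu> f + \<mu> (\<lambda>x. -1 * g x)"
    using f g by (intro positive_radon_add continuous_map_real_mult_left)
  also have "\<mu> (\<lambda>x. -1 * g x) = - \<mu> g"
    using positive_radon_scale[OF g, of "-1"] by simp
  finally show ?thesis by simp
qed

lemma positive_radon_mono:
  assumes f: "continuous_map X euclideanreal f" and g: "continuous_map X euclideanreal g"
    and le: "\<And>x. x \<in> topspace X \<Longrightarrow> f x \<le> g x"
  shows "\<mu> f \<le> \<mu> g"
proof -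
  have "0 \<le> \<mu> (\<lambda>x. g x - f x)"
    using le by (intro positive_radon_nonneg continuous_map_diff f g) simp
  then show ?thesis using positive_radon_diff[OF g f] by simp
qed

lemma positive_radon_cong:
  assumes "continuous_map X euclideanreal f" "continuous_map X euclideanreal g"
    and "\<And>x. x \<in> topspace X \<Longrightarrow> f x = g x"
  shows "\<mu> f = \<mu> g"
proof (rule order_antisym)
  show "\<mu> f \<le> \<mu> g" "\<mu> g \<le> \<mu> f"
    by (rule positive_radon_mono; simp add: assms)+
qed

lemma positive_radon_abs_le:
  assumes f: "continuous_map X euclideanreal f" and bound: "\<And>x. x \<in> topspace X \<Longrightarrow> \<bar>f x\<bar> \<le> e"
  shows "\<bar>\<mu> f\<bar> \<le> e * \<mu> (\<lambda>_. 1)"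
proof -
  have const: "\<mu> (\<lambda>_. c) = c * \<mu> (\<lambda>_. 1)" for c
    using positive_radon_scale[OF continuous_map_canonical_const, of c 1] by (simp only: mult_1_right)
  have "\<mu> (\<lambda>_. - e) \<le> \<mu> f"
  proof (rule positive_radon_mono[OF continuous_map_canonical_const f])
    show "- e \<le> f x" if "x \<in> topspace X" for x
      using abs_le_D2[OF bound[OF that]] by linarith
  qed
  moreover have "\<mu> f \<le> \<mu> (\<lambda>_. e)"
  proof (rule positive_radon_mono[OF f continuous_map_canonical_const])
    show "f x \<le> e" if "x \<in> topspace X" for x
      using abs_le_D1[OF bound[OF that]] .
  qed
  ultimately show ?thesis using const[of e] const[of "- e"] by linarith
qed

end

lemma positive_radon_eq_if_uniform_limit:
  assumes \<mu>: "positive_radon X \<mu>" and \<nu>: "positive_radon X \<nu>"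
    and \<phi>: "continuous_map X euclideanreal \<phi>"
    and approx: "\<And>e. 0 < e \<Longrightarrow> \<exists>h. continuous_map X euclideanreal h \<and> \<mu> h = \<nu> h \<and>
                                (\<forall>x\<in>topspace X. \<bar>\<phi> x - h x\<bar> \<le> e)"
  shows "\<mu> \<phi> = \<nu> \<phi>"
proof -
  define C where "C = \<mu> (\<lambda>_. 1) + \<nu> (\<lambda>_. 1)"
  have "0 \<le> C"
    unfolding C_def using positive_radon_nonneg[OF \<mu>] positive_radon_nonneg[OF \<nu>] by simp
  have bound: "\<bar>\<mu> \<phi> - \<nu> \<phi>\<bar> \<le> e * C" if e: "0 < e" for e
  proof -
    obtain h where h: "continuous_map X euclideanreal h" "\<mu> h = \<nu> h"
      and close: "\<And>x. x \<in> topspace X \<Longrightarrow> \<bar>\<phi> x - h x\<bar> \<le> e"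
      using approx[OF e] by blast
    have err: "continuous_map X euclideanreal (\<lambda>x. \<phi> x - h x)"
      using \<phi> h(1) by (rule continuous_map_diff)
    have "\<bar>\<mu> \<phi> - \<nu> \<phi>\<bar> = \<bar>\<mu> (\<lambda>x. \<phi> x - h x) - \<nu> (\<lambda>x. \<phi> x - h x)\<bar>"
      using positive_radon_diff[OF \<mu> \<phi> h(1)] positive_radon_diff[OF \<nu> \<phi> h(1)] h(2) by simp
    also have "\<dots> \<le> \<bar>\<mu> (\<lambda>x. \<phi> x - h x)\<bar> + \<bar>\<nu> (\<lambda>x. \<phi> x - h x)\<bar>"
      by (rule abs_triangle_ineq4)
    also have "\<dots> \<le> e * \<mu> (\<lambda>_. 1) + e * \<nu> (\<lambda>_. 1)"
      using close by (intro add_mono positive_radon_abs_le[OF \<mu> err] positive_radon_abs_le[OF \<nu> err])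
    finally show ?thesis by (simp add: C_def distrib_left)
  qed
  have "\<bar>\<mu> \<phi> - \<nu> \<phi>\<bar> \<le> 0 + e" if "0 < e" for e
  proof -
    have "\<bar>\<mu> \<phi> - \<nu> \<phi>\<bar> \<le> e / (C + 1) * C"
      using bound[of "e / (C + 1)"] \<open>0 \<le> C\<close> that by simp
    also have "\<dots> \<le> e"
      using \<open>0 \<le> C\<close> that by (simp add: field_simps)
    finally show ?thesis by simp
  qed
  then have "\<bar>\<mu> \<phi> - \<nu> \<phi>\<bar> \<le> 0" by (rule field_le_epsilon)
  then show ?thesis by simp
qed

section \<open>Uniform approximation by lattices of functions\<close>

lemma openin_continuous_map_less:
  assumes "continuous_map X euclideanreal f" "continuous_map X euclideanreal g"
  shows "openin X {x \<in> topspace X. f x < (g x :: real)}"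
proof -
  have "openin X {x \<in> topspace X. g x - f x \<in> {0<..}}"
    by (rule openin_continuous_map_preimage[where Y = euclideanreal])
      (simp_all add: continuous_map_diff assms)
  then show ?thesis by simp
qed

lemma pointwise_Min_closed:
  fixes L :: "('b \<Rightarrow> real) set"
  assumes min: "\<And>h k. h \<in> L \<Longrightarrow> k \<in> L \<Longrightarrow> (\<lambda>x. min (h x) (k x)) \<in> L"
  shows "finite W \<Longrightarrow> W \<noteq> {} \<Longrightarrow> (\<And>w. w \<in> W \<Longrightarrow> H w \<in> L) \<Longrightarrow>
    (\<lambda>x. Min ((\<lambda>w. H w x) ` W)) \<in> L"
proof (induction W rule: finite_ne_induct)
  case (insert w W)
  then have "(\<lambda>x. min (H w x) (Min ((\<lambda>w. H w x) ` W))) \<in> L" by (intro min) auto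
  with insert show ?case by simp
qed simp

lemma pointwise_Max_closed:
  fixes L :: "('b \<Rightarrow> real) set"
  assumes max: "\<And>h k. h \<in> L \<Longrightarrow> k \<in> L \<Longrightarrow> (\<lambda>x. max (h x) (k x)) \<in> L"
  shows "finite W \<Longrightarrow> W \<noteq> {} \<Longrightarrow> (\<And>w. w \<in> W \<Longrightarrow> H w \<in> L) \<Longrightarrow>
    (\<lambda>x. Max ((\<lambda>w. H w x) ` W)) \<in> L"
proof (induction W rule: finite_ne_induct)
  case (insert w W)
  then have "(\<lambda>x. max (H w x) (Max ((\<lambda>w. H w x) ` W))) \<in> L" by (intro max) auto
  with insert show ?case by simp
qed simp

lemma compact_space_pointed_finite_subcover:
  assumes "compact_space X"
    and "\<And>w. w \<in> topspace X \<Longrightarrow> openin X (U w)" "\<And>w. w \<in> topspace X \<Longrightarrow> w \<in> U w"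
  obtains W where "finite W" "W \<subseteq> topspace X" "topspace X \<subseteq> (\<Union>w\<in>W. U w)"
proof -
  have "topspace X \<subseteq> \<Union>(U ` topspace X)" using assms(3) by blast
  then obtain \<F> where "finite \<F>" "\<F> \<subseteq> U ` topspace X" "topspace X \<subseteq> \<Union>\<F>"
    using compact_space_alt[THEN iffD1, OF assms(1), rule_format, of "U ` topspace X"] assms(2)
    by blast
  moreover from this obtain W where "W \<subseteq> topspace X" "finite W" "\<F> = U ` W"
    by (auto dest: finite_subset_image)
  ultimately show ?thesis using that by blast
qed

lemma lattice_approx_from_above_at:
  fixes \<phi> :: "'b \<Rightarrow> real" and L :: "('b \<Rightarrow> real) set"
  assumes X: "compact_space X" and \<phi>: "continuous_map X euclideanreal \<phi>"
    and cont: "\<And>h. h \<in> L \<Longrightarrow> continuous_map X euclideanreal h"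
    and min: "\<And>h k. h \<in> L \<Longrightarrow> k \<in> L \<Longrightarrow> (\<lambda>x. min (h x) (k x)) \<in> L"
    and interp: "\<And>a b. a \<in> topspace X \<Longrightarrow> b \<in> topspace X \<Longrightarrow> \<exists>h\<in>L. h a = \<phi> a \<and> h b = \<phi> b"
    and e: "0 < e" and z: "z \<in> topspace X"
  shows "\<exists>k\<in>L. k z = \<phi> z \<and> (\<forall>x\<in>topspace X. k x < \<phi> x + e)"
proof -
  obtain H where H: "\<And>w. w \<in> topspace X \<Longrightarrow> H w \<in> L \<and> H w z = \<phi> z \<and> H w w = \<phi> w"
    using interp[OF z] by metis
  obtain W where W: "finite W" "W \<subseteq> topspace X"
    and cover: "topspace X \<subseteq> (\<Union>w\<in>W. {x \<in> topspace X. H w x < \<phi> x + e})"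
  proof (rule compact_space_pointed_finite_subcover[OF X])
    show "openin X {x \<in> topspace X. H w x < \<phi> x + e}" if "w \<in> topspace X" for w
      using H[OF that]
      by (intro openin_continuous_map_less[OF cont continuous_map_add[OF \<phi> continuous_map_canonical_const]])
        blast
    show "w \<in> {x \<in> topspace X. H w x < \<phi> x + e}" if "w \<in> topspace X" for w
      using H[OF that] that e by simp
  qed
  have "W \<noteq> {}" using cover z by blast
  show ?thesis
  proof (intro bexI conjI ballI)
    show "(\<lambda>x. Min ((\<lambda>w. H w x) ` W)) \<in> L"
      using W \<open>W \<noteq> {}\<close> H by (intro pointwise_Min_closed[OF min]) auto
    have "(\<lambda>w. H w z) ` W = (\<lambda>_. \<phi> z) ` W" using W H by (intro image_cong) auto
    also have "\<dots> = {\<phi> z}" using \<open>W \<noteq> {}\<close> by (simp add: image_constant_conv)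
    finally show "Min ((\<lambda>w. H w z) ` W) = \<phi> z" by simp
    fix x assume "x \<in> topspace X"
    then obtain w where "w \<in> W" "H w x < \<phi> x + e" using cover by blast
    moreover have "Min ((\<lambda>w. H w x) ` W) \<le> H w x" using W \<open>w \<in> W\<close> by (intro Min_le) auto
    ultimately show "Min ((\<lambda>w. H w x) ` W) < \<phi> x + e" by linarith
  qed
qed

lemma lattice_uniform_approx:
  fixes \<phi> :: "'b \<Rightarrow> real" and L :: "('b \<Rightarrow> real) set"
  assumes X: "compact_space X" and \<phi>: "continuous_map X euclideanreal \<phi>"
    and cont: "\<And>h. h \<in> L \<Longrightarrow> continuous_map X euclideanreal h"
    and min: "\<And>h k. h \<in> L \<Longrightarrow> k \<in> L \<Longrightarrow> (\<lambda>x. min (h x) (k x)) \<in> L"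
    and max: "\<And>h k. h \<in> L \<Longrightarrow> k \<in> L \<Longrightarrow> (\<lambda>x. max (h x) (k x)) \<in> L"
    and interp: "\<And>a b. a \<in> topspace X \<Longrightarrow> b \<in> topspace X \<Longrightarrow> \<exists>h\<in>L. h a = \<phi> a \<and> h b = \<phi> b"
    and "L \<noteq> {}" and e: "0 < e"
  shows "\<exists>h\<in>L. \<forall>x\<in>topspace X. \<bar>\<phi> x - h x\<bar> < e"
proof (cases "topspace X = {}")
  case True
  then show ?thesis using \<open>L \<noteq> {}\<close> by blast
next
  case False
  obtain K where K: "\<And>z. z \<in> topspace X \<Longrightarrow>
      K z \<in> L \<and> K z z = \<phi> z \<and> (\<forall>x\<in>topspace X. K z x < \<phi> x + e)"
    using lattice_approx_from_above_at[OF X \<phi> cont min interp e] by metis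
  obtain W where W: "finite W" "W \<subseteq> topspace X"
    and cover: "topspace X \<subseteq> (\<Union>w\<in>W. {x \<in> topspace X. \<phi> x - e < K w x})"
  proof (rule compact_space_pointed_finite_subcover[OF X])
    show "openin X {x \<in> topspace X. \<phi> x - e < K w x}" if "w \<in> topspace X" for w
      using K[OF that]
      by (intro openin_continuous_map_less[OF continuous_map_diff[OF \<phi> continuous_map_canonical_const] cont])
        blast
    show "w \<in> {x \<in> topspace X. \<phi> x - e < K w x}" if "w \<in> topspace X" for w
      using K[OF that] that e by simp
  qed
  have "W \<noteq> {}" using cover False by blast
  show ?thesis
  proof (intro bexI ballI)
    show "(\<lambda>x. Max ((\<lambda>w. K w x) ` W)) \<in> L"
      using W \<open>W \<noteq> {}\<close> K by (intro pointwise_Max_closed[OF max]) auto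
    fix x assume x: "x \<in> topspace X"
    let ?m = "Max ((\<lambda>w. K w x) ` W)"
    obtain w where "w \<in> W" and below: "\<phi> x - e < K w x" using cover x by blast
    have "K w x \<le> ?m" using W \<open>w \<in> W\<close> by (intro Max_ge) auto
    have "?m \<in> (\<lambda>w. K w x) ` W" using W \<open>W \<noteq> {}\<close> by (intro Max_in) auto
    then obtain w' where "w' \<in> W" "?m = K w' x" by blast
    then have "?m < \<phi> x + e" using K W x by auto
    then show "\<bar>\<phi> x - ?m\<bar> < e" using below \<open>K w x \<le> ?m\<close> by linarith
  qed
qed

section \<open>The cone G and its linear span\<close>

lemma GsetI:
  assumes "continuous_map betaM euclideanreal g"
    and "\<And>x u y::'a::metric_space. x \<noteq> u \<Longrightarrow> u \<noteq> y \<Longrightarrow> x \<noteq> y \<Longrightarrow>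
      dist x y * g (ev (x, y)) \<le> dist x u * g (ev (x, u)) + dist u y * g (ev (u, y))"
  shows "g \<in> Gset"
  using assms unfolding Gset_def Cbeta_def by auto

lemma GsetD:
  assumes "g \<in> Gset" "x \<noteq> u" "u \<noteq> y" "x \<noteq> y"
  shows "dist x y * g (ev (x, y)) \<le> dist x u * g (ev (x, u)) + dist u y * g (ev (u, y))"
  using assms unfolding Gset_def by auto

lemma Gset_continuous: "g \<in> Gset \<Longrightarrow> continuous_map betaM euclideanreal g"
  unfolding Gset_def Cbeta_def by auto

lemma Gset_const: "0 \<le> c \<Longrightarrow> (\<lambda>_. c) \<in> Gset"
  unfolding Gset_def Cbeta_def
  by (auto intro!: mult_right_mono dist_triangle simp flip: distrib_right)

lemma Gset_add:
  assumes g: "g \<in> Gset" and h: "h \<in> Gset"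
  shows "(\<lambda>z. g z + h z) \<in> Gset"
proof (rule GsetI)
  show "continuous_map betaM euclideanreal (\<lambda>z. g z + h z)"
    using g h by (intro continuous_map_add Gset_continuous)
  fix x u y :: 'a assume d: "x \<noteq> u" "u \<noteq> y" "x \<noteq> y"
  show "dist x y * (g (ev (x, y)) + h (ev (x, y))) \<le>
        dist x u * (g (ev (x, u)) + h (ev (x, u))) + dist u y * (g (ev (u, y)) + h (ev (u, y)))"
    using GsetD[OF g d] GsetD[OF h d] by (simp add: distrib_left)
qed

lemma Gset_scale:
  assumes g: "g \<in> Gset" and c: "0 \<le> c"
  shows "(\<lambda>z. c * g z) \<in> Gset"
proof (rule GsetI)
  show "continuous_map betaM euclideanreal (\<lambda>z. c * g z)"
    using g by (intro continuous_map_real_mult_left Gset_continuous)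
  fix x u y :: 'a assume "x \<noteq> u" "u \<noteq> y" "x \<noteq> y"
  then have "c * (dist x y * g (ev (x, y))) \<le> c * (dist x u * g (ev (x, u)) + dist u y * g (ev (u, y)))"
    using GsetD[OF g] c by (intro mult_left_mono) auto
  then show "dist x y * (c * g (ev (x, y))) \<le> dist x u * (c * g (ev (x, u))) + dist u y * (c * g (ev (u, y)))"
    by (simp add: algebra_simps)
qed

lemma Gset_max:
  assumes g: "g \<in> Gset" and h: "h \<in> Gset"
  shows "(\<lambda>z. max (g z) (h z)) \<in> Gset"
proof (rule GsetI)
  show "continuous_map betaM euclideanreal (\<lambda>z. max (g z) (h z))"
    using g h by (intro continuous_map_real_max Gset_continuous)
  fix x u y :: 'a assume d: "x \<noteq> u" "u \<noteq> y" "x \<noteq> y"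
  define m where "m p q = max (g (ev (p, q))) (h (ev (p, q)))" for p q
  let ?rhs = "dist x u * m x u + dist u y * m u y"
  have "dist x u * g (ev (x, u)) + dist u y * g (ev (u, y)) \<le> ?rhs"
    "dist x u * h (ev (x, u)) + dist u y * h (ev (u, y)) \<le> ?rhs"
    unfolding m_def by (intro add_mono mult_left_mono; simp)+
  then have "max (dist x y * g (ev (x, y))) (dist x y * h (ev (x, y))) \<le> ?rhs"
    using GsetD[OF g d] GsetD[OF h d] by simp
  then show "dist x y * max (g (ev (x, y))) (h (ev (x, y))) \<le>
             dist x u * max (g (ev (x, u))) (h (ev (x, u))) + dist u y * max (g (ev (u, y))) (h (ev (u, y)))"
    by (simp add: m_def max_mult_distrib_left)
qed

definition Gspan :: "(((('a::metric_space \<times> 'a) \<Rightarrow> real) \<Rightarrow> real) \<Rightarrow> real) set" where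
  "Gspan = {(\<lambda>z. g1 z - g2 z) | g1 g2. g1 \<in> Gset \<and> g2 \<in> Gset}"

lemma GspanI: "g1 \<in> Gset \<Longrightarrow> g2 \<in> Gset \<Longrightarrow> h = (\<lambda>z. g1 z - g2 z) \<Longrightarrow> h \<in> Gspan"
  unfolding Gspan_def by blast

lemma GspanE:
  assumes "h \<in> Gspan"
  obtains g1 g2 where "g1 \<in> Gset" "g2 \<in> Gset" "h = (\<lambda>z. g1 z - g2 z)"
  using assms unfolding Gspan_def by blast

lemma Gspan_continuous: "h \<in> Gspan \<Longrightarrow> continuous_map betaM euclideanreal h"
  by (elim GspanE) (simp add: continuous_map_diff Gset_continuous)

lemma Gset_subset_Gspan: "Gset \<subseteq> Gspan"
  using GspanI[of _ "\<lambda>_. 0"] Gset_const by fastforce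

lemma const_in_Gspan: "(\<lambda>_. c) \<in> Gspan"
proof (cases "0 \<le> c")
  case True
  then show ?thesis by (intro GspanI[of "\<lambda>_. c" "\<lambda>_. 0"] Gset_const) auto
next
  case False
  then show ?thesis by (intro GspanI[of "\<lambda>_. 0" "\<lambda>_. - c"] Gset_const) auto
qed

lemma Gspan_add:
  assumes "h \<in> Gspan" "k \<in> Gspan"
  shows "(\<lambda>z. h z + k z) \<in> Gspan"
proof -
  obtain g1 g2 where "g1 \<in> Gset" "g2 \<in> Gset" "h = (\<lambda>z. g1 z - g2 z)"
    using assms(1) by (rule GspanE)
  moreover obtain f1 f2 where "f1 \<in> Gset" "f2 \<in> Gset" "k = (\<lambda>z. f1 z - f2 z)"
    using assms(2) by (rule GspanE)
  ultimately show ?thesis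
    by (intro GspanI[of "\<lambda>z. g1 z + f1 z" "\<lambda>z. g2 z + f2 z"] Gset_add) auto
qed

lemma Gspan_scale:
  assumes "h \<in> Gspan"
  shows "(\<lambda>z. c * h z) \<in> Gspan"
proof -
  obtain g1 g2 where g: "g1 \<in> Gset" "g2 \<in> Gset" and h: "h = (\<lambda>z. g1 z - g2 z)"
    using assms by (rule GspanE)
  show ?thesis
  proof (cases "0 \<le> c")
    case True
    with g show ?thesis
      by (intro GspanI[of "\<lambda>z. c * g1 z" "\<lambda>z. c * g2 z"] Gset_scale) (auto simp: h algebra_simps)
  next
    case False
    with g show ?thesis
      by (intro GspanI[of "\<lambda>z. - c * g2 z" "\<lambda>z. - c * g1 z"] Gset_scale) (auto simp: h algebra_simps)
  qed
qed

lemma Gspan_max: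
  assumes "h \<in> Gspan" "k \<in> Gspan"
  shows "(\<lambda>z. max (h z) (k z)) \<in> Gspan"
proof -
  obtain g1 g2 where g: "g1 \<in> Gset" "g2 \<in> Gset" and h: "h = (\<lambda>z. g1 z - g2 z)"
    using assms(1) by (rule GspanE)
  obtain f1 f2 where f: "f1 \<in> Gset" "f2 \<in> Gset" and k: "k = (\<lambda>z. f1 z - f2 z)"
    using assms(2) by (rule GspanE)
  have "max (g1 z - g2 z) (f1 z - f2 z) = max (g1 z + f2 z) (f1 z + g2 z) - (g2 z + f2 z)" for z
    by (simp add: max_def)
  with g f show ?thesis
    by (intro GspanI[of "\<lambda>z. max (g1 z + f2 z) (f1 z + g2 z)" "\<lambda>z. g2 z + f2 z"] Gset_max Gset_add)
      (auto simp: h k)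
qed

lemma Gspan_min:
  assumes "h \<in> Gspan" "k \<in> Gspan"
  shows "(\<lambda>z. min (h z) (k z)) \<in> Gspan"
proof -
  have "(\<lambda>z. -1 * max (-1 * h z) (-1 * k z)) \<in> Gspan"
    using assms by (intro Gspan_scale Gspan_max)
  moreover have "-1 * max (-1 * h z) (-1 * k z) = min (h z) (k z)" for z :: "('a \<times> 'a \<Rightarrow> real) \<Rightarrow> real"
    by (simp add: max_def min_def)
  ultimately show ?thesis by simp
qed

section \<open>Functions constant on the classes of \<open>\<sim>\<close>\<close>

lemma Gspan_interpolates:
  assumes \<phi>: "\<And>a b. a \<in> topspace betaM \<Longrightarrow> b \<in> topspace betaM \<Longrightarrow> Gequiv a b \<Longrightarrow> \<phi> a = \<phi> b"
    and a: "a \<in> topspace betaM" and b: "b \<in> topspace betaM"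
  shows "\<exists>h\<in>Gspan. h a = \<phi> a \<and> h b = \<phi> b"
proof (cases "Gequiv a b")
  case True
  then show ?thesis using \<phi>[OF a b] const_in_Gspan by fastforce
next
  case False
  then obtain g where g: "g \<in> Gset" "g a \<noteq> g b" unfolding Gequiv_def by auto
  define c where "c = (\<phi> b - \<phi> a) / (g b - g a)"
  have affine: "(\<lambda>z. c * g z + (\<phi> a - c * g a)) \<in> Gspan"
    using g(1) Gset_subset_Gspan by (intro Gspan_add Gspan_scale const_in_Gspan) auto
  have "c * (g b - g a) = \<phi> b - \<phi> a"
    using g(2) by (simp add: c_def)
  then have "c * g b + (\<phi> a - c * g a) = \<phi> b"
    by (simp add: algebra_simps)
  with affine show ?thesis by (intro bexI[of _ "\<lambda>z. c * g z + (\<phi> a - c * g a)"]) auto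
qed

lemma Gspan_uniform_approx:
  assumes "continuous_map betaM euclideanreal \<phi>"
    and "\<And>a b. a \<in> topspace betaM \<Longrightarrow> b \<in> topspace betaM \<Longrightarrow> Gequiv a b \<Longrightarrow> \<phi> a = \<phi> b"
    and "0 < e"
  shows "\<exists>h\<in>Gspan. \<forall>x\<in>topspace betaM. \<bar>\<phi> x - h x\<bar> < e"
proof (rule lattice_uniform_approx[where L = Gspan, OF compact_space_betaM assms(1)])
  show "\<exists>h\<in>Gspan. h a = \<phi> a \<and> h b = \<phi> b" if "a \<in> topspace betaM" "b \<in> topspace betaM" for a b
    using assms(2) that by (rule Gspan_interpolates)
  show "Gspan \<noteq> {}" using const_in_Gspan by blast
qed (simp_all add: Gspan_continuous Gspan_min Gspan_max assms(3))

lemma positive_radon_eq_on_Gspan: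
  assumes \<mu>: "positive_radon betaM \<mu>" and \<nu>: "positive_radon betaM \<nu>"
    and eq: "\<forall>g\<in>Gset. \<mu> g = \<nu> g" and h: "h \<in> Gspan"
  shows "\<mu> h = \<nu> h"
proof -
  obtain g1 g2 where g: "g1 \<in> Gset" "g2 \<in> Gset" and h: "h = (\<lambda>z. g1 z - g2 z)"
    using h by (rule GspanE)
  show ?thesis
    using positive_radon_diff[OF \<mu> Gset_continuous[OF g(1)] Gset_continuous[OF g(2)]]
      positive_radon_diff[OF \<nu> Gset_continuous[OF g(1)] Gset_continuous[OF g(2)]] g eq
    by (simp add: h)
qed

lemma positive_radon_eq_if_Gequiv_invariant:
  assumes \<mu>: "positive_radon betaM \<mu>" and \<nu>: "positive_radon betaM \<nu>"
    and eq: "\<forall>g\<in>Gset. \<mu> g = \<nu> g"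
    and \<phi>: "continuous_map betaM euclideanreal \<phi>"
    and inv: "\<And>a b. a \<in> topspace betaM \<Longrightarrow> b \<in> topspace betaM \<Longrightarrow> Gequiv a b \<Longrightarrow> \<phi> a = \<phi> b"
  shows "\<mu> \<phi> = \<nu> \<phi>"
proof (rule positive_radon_eq_if_uniform_limit[OF \<mu> \<nu> \<phi>])
  fix e :: real assume "0 < e"
  then obtain h where "h \<in> Gspan" "\<forall>x\<in>topspace betaM. \<bar>\<phi> x - h x\<bar> < e"
    using Gspan_uniform_approx[OF \<phi> inv] by blast
  then show "\<exists>h. continuous_map betaM euclideanreal h \<and> \<mu> h = \<nu> h \<and>
                 (\<forall>x\<in>topspace betaM. \<bar>\<phi> x - h x\<bar> \<le> e)"
    using Gspan_continuous positive_radon_eq_on_Gspan[OF \<mu> \<nu> eq] less_imp_le by blast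
qed

lemma quotient_map_qmap: "quotient_map betaM MG qmap"
  unfolding MG_def by (rule quotient_map_quotient_top)

lemma Gequiv_imp_qmap_eq:
  assumes "Gequiv a b"
  shows "qmap a = qmap b"
proof -
  have "Gequiv a \<omega> \<longleftrightarrow> Gequiv b \<omega>" for \<omega>
    using assms unfolding Gequiv_def by metis
  then show ?thesis unfolding qmap_def by simp
qed

lemma qmap_eq_imp_Gequiv:
  assumes "b \<in> topspace betaM" "qmap a = qmap b"
  shows "Gequiv a b"
proof -
  have "b \<in> qmap b" using assms(1) unfolding qmap_def Gequiv_def by simp
  then have "b \<in> qmap a" using assms(2) by simp
  then show ?thesis unfolding qmap_def by simp
qed

lemma continuous_map_compose_qmap:
  "continuous_map MG euclideanreal f \<Longrightarrow> continuous_map betaM euclideanreal (f \<circ> qmap)"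
  using quotient_imp_continuous_map[OF quotient_map_qmap] by (rule continuous_map_compose)

lemma Gset_factors_through_qmap:
  assumes g: "g \<in> Gset"
  shows "\<exists>f. continuous_map MG euclideanreal f \<and> (\<forall>x\<in>topspace betaM. f (qmap x) = g x)"
proof -
  obtain f where "continuous_map MG euclideanreal f" "\<And>x. x \<in> topspace betaM \<Longrightarrow> f (qmap x) = g x"
  proof (rule quotient_map_lift_exists[OF quotient_map_qmap Gset_continuous[OF g]])
    show "g x = g y" if "y \<in> topspace betaM" "qmap x = qmap y" for x y
      using qmap_eq_imp_Gequiv[OF that] g unfolding Gequiv_def by blast
  qed (rule that)
  then show ?thesis by blast
qed

theorem proposition3p3:
  fixes \<mu> \<nu> :: "((((('a::complete_space \<times> 'a) \<Rightarrow> real) \<Rightarrow> real) \<Rightarrow> real) \<Rightarrow> real)"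
    and x0 :: 'a
  assumes three: "\<exists>a b c::'a. a \<noteq> b \<and> b \<noteq> c \<and> a \<noteq> c"
    and mu: "positive_radon betaM \<mu>"
    and nu: "positive_radon betaM \<nu>"
  shows "(preceq \<mu> \<nu> \<and> preceq \<nu> \<mu>) \<longleftrightarrow>
         (\<forall>f. continuous_map MG euclideanreal f \<longrightarrow> push \<mu> f = push \<nu> f)"
proof -
  have "(preceq \<mu> \<nu> \<and> preceq \<nu> \<mu>) \<longleftrightarrow> (\<forall>g\<in>Gset. \<mu> g = \<nu> g)"
    unfolding preceq_def by (auto intro: order_antisym)
  moreover have "push \<mu> f = push \<nu> f"
    if "\<forall>g\<in>Gset. \<mu> g = \<nu> g" "continuous_map MG euclideanreal f" for f
    unfolding push_def using that
    by (intro positive_radon_eq_if_Gequiv_invariant[OF mu nu] continuous_map_compose_qmap)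
      (simp_all add: Gequiv_imp_qmap_eq)
  moreover have "\<mu> g = \<nu> g"
    if push: "\<forall>f. continuous_map MG euclideanreal f \<longrightarrow> push \<mu> f = push \<nu> f" and g: "g \<in> Gset" for g
  proof -
    obtain f where f: "continuous_map MG euclideanreal f"
      and fg: "\<forall>x\<in>topspace betaM. f (qmap x) = g x"
      using Gset_factors_through_qmap[OF g] by blast
    have "push \<mu> f = \<mu> g" "push \<nu> f = \<nu> g"
      unfolding push_def using fg
      by (simp_all add: positive_radon_cong[OF mu continuous_map_compose_qmap[OF f] Gset_continuous[OF g]]
          positive_radon_cong[OF nu continuous_map_compose_qmap[OF f] Gset_continuous[OF g]])
    then show ?thesis using push f by simp
  qed
  ultimately show ?thesis by blast
qed

end
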